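(* Any algorithm that maintains a uniformly random sample of the active elements within a timestamp-based sliding window has memory usage $\Omega(\log n)$, where $n$ is the number of active elements: there exist streams for which, with positive probability, at some time the algorithm must store $\Omega(\log n)$ distinct elements.
   Context: A stream $p_0,p_1,\dots$ has non-decreasing timestamps $T(p_i)$ (several elements may share a timestamp); with fixed parameter $t_0$, element $p$ is active at time $t$ if $t-T(p)<t_0$, otherwise expired. The sample at each time must be uniform over the active elements at that time. *)

theory Defs
  imports "HOL-Probability.Probability"
begin

text \<open>A finite stream is a list of real timestamps ts (sorted = non-decreasing);
  element p_i is identified with its index i < length ts and has timestamp ts ! i.\<close>

definition arrived :: "real list \<Rightarrow> real \<Rightarrow> nat set" where
  "arrived ts t = {i. i < length ts \<and> ts ! i \<le> t}"

definition active :: "real \<Rightarrow> real list \<Rightarrow> real \<Rightarrow> nat set" where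
  "active t0 ts t = {i. i < length ts \<and> ts ! i \<le> t \<and> t - ts ! i < t0}"

text \<open>A randomized sliding-window sampling algorithm, with randomness drawn from the
  probability space M.  For a stream ts, a time t and random outcome w,
  Mem ts t w is the set of (indices of) distinct stream elements stored in memory
  at time t, and Smp ts t w is the sample reported at time t.
  Requirements: measurability; online (behaviour up to time t depends only on the
  elements that arrived by time t); only arrived elements can be stored; an element
  removed from memory cannot be recovered later; the sample is a stored element;
  the sample at every time is uniform over the active elements.\<close>
definition window_sampler ::
  "'w measure \<Rightarrow> real \<Rightarrow> (real list \<Rightarrow> real \<Rightarrow> 'w \<Rightarrow> nat set)
     \<Rightarrow> (real list \<Rightarrow> real \<Rightarrow> 'w \<Rightarrow> nat) \<Rightarrow> bool" where
  "window_sampler M t0 Mem Smp \<longleftrightarrow>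
     prob_space M \<and>
     (\<forall>ts t i. sorted ts \<longrightarrow>
        {w \<in> space M. i \<in> Mem ts t w} \<in> sets M \<and>
        {w \<in> space M. Smp ts t w = i} \<in> sets M) \<and>
     (\<forall>ts ts' t. sorted ts \<longrightarrow> sorted ts' \<longrightarrow>
        takeWhile (\<lambda>s. s \<le> t) ts = takeWhile (\<lambda>s. s \<le> t) ts' \<longrightarrow>
        Mem ts t = Mem ts' t \<and> Smp ts t = Smp ts' t) \<and>
     (\<forall>ts t. sorted ts \<longrightarrow> (\<forall>w\<in>space M. Mem ts t w \<subseteq> arrived ts t)) \<and>
     (\<forall>ts t t'. sorted ts \<longrightarrow> t \<le> t' \<longrightarrow>
        (\<forall>w\<in>space M. Mem ts t' w \<subseteq> Mem ts t w \<union> (arrived ts t' - arrived ts t))) \<and>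
     (\<forall>ts t. sorted ts \<longrightarrow> active t0 ts t \<noteq> {} \<longrightarrow>
        (\<forall>w\<in>space M. Smp ts t w \<in> Mem ts t w)) \<and>
     (\<forall>ts t. sorted ts \<longrightarrow> active t0 ts t \<noteq> {} \<longrightarrow>
        (\<forall>i\<in>active t0 ts t.
           measure M {w \<in> space M. Smp ts t w = i} = 1 / real (card (active t0 ts t))))"

end

theory Submission
  imports Defs "HOL-Analysis.Harmonic_Numbers"
begin

text \<open>Feed n elements at spacing d = t0/n, so that at the times (n - 1 + k) d, k < n, no new
  element arrives and exactly the elements k, ..., n - 1 are active. Whatever is sampled at
  one of these later times must already be stored at time (n - 1) d, when all n elements
  are active. Element k is the sample at time (n - 1 + k) d with probability 1/(n - k),
  so the expected memory at time (n - 1) d is at least 1/n + ... + 1/1 = H_n > ln n, and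
  the memory exceeds ln n with positive probability.\<close>

lemma (in prob_space) prob_ge_pos_if_expectation_gt:
  fixes X :: "'a \<Rightarrow> real"
  assumes "integrable M X" and "c < expectation X"
  shows "0 < prob {x \<in> space M. c \<le> X x}"
proof (rule ccontr)
  let ?S = "{x \<in> space M. c \<le> X x}"
  assume "\<not> 0 < prob ?S"
  moreover have "?S \<in> events"
    using borel_measurable_integrable[OF assms(1)] by measurable
  ultimately have "?S \<in> null_sets M"
    using measure_nonneg[of M ?S] by (simp add: emeasure_eq_measure null_sets_def)
  then have "AE x in M. X x \<le> c"
    by (rule AE_mp[OF AE_not_in AE_I2]) auto
  then have "expectation X \<le> expectation (\<lambda>_. c)"
    using assms(1) by (intro integral_mono_AE) auto
  with assms(2) show False
    by (simp add: prob_space)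
qed

lemma harm_eq_sum_inverse_diff: "harm n = (\<Sum>k<n. 1 / real (n - k))"
proof -
  have "(\<Sum>k<n. 1 / real (n - k)) = (\<Sum>k<n. (\<lambda>j. inverse (real (Suc j))) (n - Suc k))"
    by (intro sum.cong) (auto simp: Suc_diff_Suc field_simps)
  also have "\<dots> = (\<Sum>j<n. inverse (real (Suc j)))"
    by (rule sum.nat_diff_reindex)
  finally show ?thesis
    by (simp add: harm_altdef)
qed

definition staircase_stream :: "nat \<Rightarrow> real \<Rightarrow> real list" where
  "staircase_stream n d = map (\<lambda>i. real i * d) [0..<n]"

lemma length_staircase_stream [simp]: "length (staircase_stream n d) = n"
  by (simp add: staircase_stream_def)

lemma nth_staircase_stream [simp]: "i < n \<Longrightarrow> staircase_stream n d ! i = real i * d"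
  by (simp add: staircase_stream_def)

lemma sorted_staircase_stream: "0 \<le> d \<Longrightarrow> sorted (staircase_stream n d)"
  by (auto simp: sorted_iff_nth_mono intro: mult_right_mono)

lemma arrived_staircase_stream:
  assumes "0 \<le> d" and "(real n - 1) * d \<le> t"
  shows "arrived (staircase_stream n d) t = {..<n}"
proof -
  have "real i * d \<le> t" if "i < n" for i
  proof -
    have "real i * d \<le> (real n - 1) * d"
      using that assms(1) by (intro mult_right_mono) auto
    with assms(2) show ?thesis by linarith
  qed
  then show ?thesis
    by (auto simp: arrived_def)
qed

lemma active_staircase_stream:
  assumes "0 < d"
  shows "active (real n * d) (staircase_stream n d) ((real n - 1 + real k) * d) = {k..<n}"
proof -
  have "(real n - 1 + real k) * d - real i * d < real n * d \<longleftrightarrow> k \<le> i" for i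
  proof -
    have "(real n - 1 + real k) * d - real i * d = (real n - 1 + real k - real i) * d"
      by (simp add: left_diff_distrib)
    also have "\<dots> < real n * d \<longleftrightarrow> real n - 1 + real k - real i < real n"
      using assms by simp
    also have "\<dots> \<longleftrightarrow> k \<le> i" by linarith
    finally show ?thesis .
  qed
  moreover have "real i * d \<le> (real n - 1 + real k) * d" if "i < n" for i
    using that assms by (intro mult_right_mono) auto
  ultimately show ?thesis
    by (auto simp: active_def)
qed

locale sliding_window_sampler =
  fixes M :: "'w measure" and t0 :: real
    and Mem :: "real list \<Rightarrow> real \<Rightarrow> 'w \<Rightarrow> nat set"
    and Smp :: "real list \<Rightarrow> real \<Rightarrow> 'w \<Rightarrow> nat"
  assumes window_sampler: "window_sampler M t0 Mem Smp"
begin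

sublocale prob_space M
  using window_sampler unfolding window_sampler_def by meson

lemma sets_Mem: "sorted ts \<Longrightarrow> {w \<in> space M. i \<in> Mem ts t w} \<in> events"
  using window_sampler unfolding window_sampler_def by meson

lemma sets_Smp: "sorted ts \<Longrightarrow> {w \<in> space M. Smp ts t w = i} \<in> events"
  using window_sampler unfolding window_sampler_def by meson

lemma Mem_subset_arrived: "sorted ts \<Longrightarrow> w \<in> space M \<Longrightarrow> Mem ts t w \<subseteq> arrived ts t"
  using window_sampler unfolding window_sampler_def by meson

lemma Mem_later_subset:
  "sorted ts \<Longrightarrow> t \<le> t' \<Longrightarrow> w \<in> space M \<Longrightarrow>
    Mem ts t' w \<subseteq> Mem ts t w \<union> (arrived ts t' - arrived ts t)"
  using window_sampler unfolding window_sampler_def by meson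

lemma Smp_in_Mem:
  "sorted ts \<Longrightarrow> active t0 ts t \<noteq> {} \<Longrightarrow> w \<in> space M \<Longrightarrow> Smp ts t w \<in> Mem ts t w"
  using window_sampler unfolding window_sampler_def by meson

lemma prob_Smp_eq:
  assumes "sorted ts" and "i \<in> active t0 ts t"
  shows "prob {w \<in> space M. Smp ts t w = i} = 1 / real (card (active t0 ts t))"
proof -
  have "active t0 ts t \<noteq> {}"
    using assms(2) by blast
  with assms window_sampler show ?thesis
    unfolding window_sampler_def by meson
qed

lemma Smp_in_earlier_Mem:
  assumes "sorted ts" and "t \<le> t'" and "arrived ts t' = arrived ts t"
    and "active t0 ts t' \<noteq> {}" and "w \<in> space M"
  shows "Smp ts t' w \<in> Mem ts t w"
  using Smp_in_Mem[of ts t' w] Mem_later_subset[of ts t t' w] assms by auto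

lemma Mem_subset_length: "sorted ts \<Longrightarrow> w \<in> space M \<Longrightarrow> Mem ts t w \<subseteq> {..<length ts}"
  using Mem_subset_arrived by (fastforce simp: arrived_def)

lemma integrable_card_Mem:
  assumes "sorted ts"
  shows "integrable M (\<lambda>w. real (card (Mem ts t w)))"
proof -
  let ?B = "\<lambda>i. {w \<in> space M. i \<in> Mem ts t w}"
  have card_eq_sum: "real (card (Mem ts t w)) = (\<Sum>i<length ts. indicator (?B i) w)"
    if "w \<in> space M" for w
  proof -
    have "{..<length ts} \<inter> {i. w \<in> ?B i} = Mem ts t w"
      using Mem_subset_length[OF assms that] that by blast
    then show ?thesis
      by (simp add: indicator_def)
  qed
  have "integrable M (\<lambda>w. \<Sum>i<length ts. indicator (?B i) w :: real)"
    using sets_Mem[OF assms] by (auto simp: emeasure_eq_measure)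
  moreover have "integrable M (\<lambda>w. real (card (Mem ts t w))) \<longleftrightarrow>
      integrable M (\<lambda>w. \<Sum>i<length ts. indicator (?B i) w :: real)"
    by (rule Bochner_Integration.integrable_cong) (simp_all add: card_eq_sum)
  ultimately show ?thesis
    by simp
qed

text \<open>Each x k that is the sample at \<tau> k was already stored at time t, since nothing arrives
  in between; as the x k are distinct, their number bounds the memory at time t.\<close>

lemma expectation_card_Mem_ge:
  assumes "sorted ts" and "finite K" and "inj_on x K"
    and later: "\<And>k. k \<in> K \<Longrightarrow>
      t \<le> \<tau> k \<and> arrived ts (\<tau> k) = arrived ts t \<and> x k \<in> active t0 ts (\<tau> k)"
  shows "(\<Sum>k\<in>K. 1 / real (card (active t0 ts (\<tau> k))))
    \<le> expectation (\<lambda>w. real (card (Mem ts t w)))"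
proof -
  let ?A = "\<lambda>k. {w \<in> space M. Smp ts (\<tau> k) w = x k}"
  have hit_in_Mem: "x k \<in> Mem ts t w" if "k \<in> K" and "w \<in> ?A k" for k w
  proof -
    from later[OF that(1)] have "t \<le> \<tau> k" and "arrived ts (\<tau> k) = arrived ts t"
      and "active t0 ts (\<tau> k) \<noteq> {}"
      by auto
    from Smp_in_earlier_Mem[OF assms(1) this, of w] that(2) show ?thesis
      by auto
  qed
  have hits_le_card_Mem: "(\<Sum>k\<in>K. indicator (?A k) w) \<le> real (card (Mem ts t w))"
    if w: "w \<in> space M" for w
  proof -
    let ?H = "K \<inter> {k. w \<in> ?A k}"
    have "x ` ?H \<subseteq> Mem ts t w"
      using hit_in_Mem by blast
    moreover have "finite (Mem ts t w)"
      using Mem_subset_length[OF assms(1) w] finite_subset by blast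
    ultimately have "card (x ` ?H) \<le> card (Mem ts t w)"
      by (rule card_mono[rotated])
    moreover have "card (x ` ?H) = card ?H"
      using inj_on_subset[OF assms(3)] by (intro card_image) blast
    moreover have "(\<Sum>k\<in>K. indicator (?A k) w) = real (card ?H)"
      using assms(2) by (simp add: indicator_def)
    ultimately show ?thesis
      by simp
  qed
  have integrable_hit: "integrable M (indicator (?A k) :: 'w \<Rightarrow> real)" for k
    by (rule integrable_real_indicator[OF sets_Smp[OF assms(1)]]) (simp add: emeasure_eq_measure)
  have expectation_hit: "expectation (indicator (?A k)) = 1 / real (card (active t0 ts (\<tau> k)))"
    if "k \<in> K" for k
  proof -
    from later[OF that] have "x k \<in> active t0 ts (\<tau> k)"
      by blast
    then have "prob (?A k) = 1 / real (card (active t0 ts (\<tau> k)))"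
      by (rule prob_Smp_eq[OF assms(1)])
    moreover have "?A k \<inter> space M = ?A k"
      by blast
    ultimately show ?thesis
      by simp
  qed
  have "(\<Sum>k\<in>K. 1 / real (card (active t0 ts (\<tau> k))))
      = (\<Sum>k\<in>K. expectation (indicator (?A k)))"
    by (rule sum.cong[OF refl expectation_hit[symmetric]])
  also have "\<dots> = expectation (\<lambda>w. \<Sum>k\<in>K. indicator (?A k) w)"
    using integrable_hit by (rule Bochner_Integration.integral_sum[symmetric])
  also have "\<dots> \<le> expectation (\<lambda>w. real (card (Mem ts t w)))"
  proof (rule integral_mono)
    show "integrable M (\<lambda>w. \<Sum>k\<in>K. indicator (?A k) w :: real)"
      using integrable_hit by (rule Bochner_Integration.integrable_sum)
  qed (use hits_le_card_Mem integrable_card_Mem[OF assms(1)] in auto)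
  finally show ?thesis .
qed

lemma staircase_memory_ge_ln:
  assumes d: "0 < d" and n: "1 \<le> n" and t0_eq: "t0 = real n * d"
  shows "0 < prob {w \<in> space M.
    ln (real n) \<le> real (card (Mem (staircase_stream n d) ((real n - 1) * d) w))}"
proof -
  let ?ts = "staircase_stream n d"
  define \<tau> where "\<tau> k = (real n - 1 + real k) * d" for k
  have sorted: "sorted ?ts"
    using d by (simp add: sorted_staircase_stream)
  have active: "active t0 ?ts (\<tau> k) = {k..<n}" for k
    using active_staircase_stream[OF d] by (simp add: t0_eq \<tau>_def)
  have arrived: "arrived ?ts (\<tau> k) = {..<n}" for k
  proof (rule arrived_staircase_stream)
    show "(real n - 1) * d \<le> \<tau> k"
      using d by (simp add: \<tau>_def)
  qed (use d in simp)
  have "ln (real n) < ln (real n + 1)"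
    using n by simp
  also have "\<dots> \<le> harm n"
    by (rule ln_le_harm)
  also have "harm n = (\<Sum>k<n. 1 / real (card (active t0 ?ts (\<tau> k))))"
    by (simp add: active harm_eq_sum_inverse_diff)
  also have "\<dots> \<le> expectation (\<lambda>w. real (card (Mem ?ts (\<tau> 0) w)))"
  proof (rule expectation_card_Mem_ge[OF sorted, where x = id])
    fix k assume "k \<in> {..<n}"
    have "\<tau> 0 \<le> \<tau> k"
      using d by (simp add: \<tau>_def)
    with \<open>k \<in> {..<n}\<close> show
      "\<tau> 0 \<le> \<tau> k \<and> arrived ?ts (\<tau> k) = arrived ?ts (\<tau> 0) \<and> id k \<in> active t0 ?ts (\<tau> k)"
      by (simp only: arrived active) simp
  qed auto
  finally show ?thesis
    using prob_ge_pos_if_expectation_gt[OF integrable_card_Mem[OF sorted]] by (simp add: \<tau>_def)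
qed

end

theorem lemma4p7:
  "\<exists>c>0. \<exists>N::nat. \<forall>(t0::real) (M::'w measure) Mem Smp.
     t0 > 0 \<longrightarrow> window_sampler M t0 Mem Smp \<longrightarrow>
     (\<forall>n\<ge>N. \<exists>ts t. sorted ts \<and> card (active t0 ts t) = n \<and>
        measure M {w \<in> space M. real (card (Mem ts t w)) \<ge> c * ln (real n)} > 0)"
proof (intro exI[of _ "1::real"] conjI exI[of _ "1::nat"] allI impI)
  fix t0 :: real and M :: "'w measure" and Mem Smp and n :: nat
  assume t0: "t0 > 0" and "window_sampler M t0 Mem Smp" and n: "n \<ge> 1"
  then interpret sliding_window_sampler M t0 Mem Smp
    by unfold_locales
  define d where "d = t0 / real n"
  have d: "0 < d" and t0_eq: "t0 = real n * d"
    using t0 n by (auto simp: d_def)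
  let ?ts = "staircase_stream n d" and ?t = "(real n - 1) * d"
  have "sorted ?ts"
    using d by (rule sorted_staircase_stream[OF less_imp_le])
  moreover have "card (active t0 ?ts ?t) = n"
    using active_staircase_stream[OF d, of n 0] by (simp add: t0_eq)
  moreover have "0 < prob {w \<in> space M. ln (real n) \<le> real (card (Mem ?ts ?t w))}"
    using staircase_memory_ge_ln[OF d n t0_eq] .
  ultimately show "\<exists>ts t. sorted ts \<and> card (active t0 ts t) = n \<and>
      measure M {w \<in> space M. real (card (Mem ts t w)) \<ge> 1 * ln (real n)} > 0"
    by auto
qed simp

end
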